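(* Let $(X,\delta,\epsilon)$ be an $X$-self-adjoint internal commutative comonoid in a $\dagger$-compact category. Then: (i) the Frobenius identity $\delta\circ\delta^\dagger=(\delta^\dagger\otimes 1_X)\circ(1_X\otimes\delta)$ holds; (ii) $\delta$ is invariant under partial transpose: $(1_X\otimes\eta_X^\dagger\otimes 1_X)\circ(\sigma_{X,X}\otimes\delta)\circ(1_X\otimes\eta_X)=\delta$; (iii) $\delta_*=\delta$ (equivalently $\delta^*=\delta^\dagger$), where $\delta_*$ is regarded as a morphism $X\to X\otimes X$ via $X^*=X$ and $(X\otimes X)^*=X^*\otimes X^*=X\otimes X$.
   Context: A $\dagger$-compact category is a symmetric monoidal category $(\mathbf{C},\otimes,\mathrm{I})$, treated as strict (associators and unitors suppressed), with symmetry $\sigma_{A,B}:A\otimes B\to B\otimes A$, equipped with a contravariant functor $(-)^\dagger$ which is the identity on objects, involutive and monoidal (structural isomorphisms unitary), together with, for each object $A$, an object $A^*$ (with $A^{**}=A$) and a morphism $\eta_A:\mathrm{I}\to A^*\otimes A$ such that $\eta_{A^*}=\sigma_{A^*,A}\circ\eta_A$ and $(\eta_{A^*}^\dagger\otimes 1_A)\circ(1_A\otimes\eta_A)=1_A$. Duals of tensor products are the canonical ones: $(A\otimes B)^*=A^*\otimes B^*$ with $\eta_{A\otimes B}=(1_{A^*}\otimes\sigma_{A,B^*}\otimes 1_B)\circ(\eta_A\otimes\eta_B)$. For $f:A\to B$ define $f^*:B^*\to A^*$ by $f^*:=(1_{A^*}\otimes\eta_{B^*}^\dagger)\circ(1_{A^*}\otimes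 f\otimes 1_{B^*})\circ(\eta_A\otimes 1_{B^*})$, and the conjugate $f_*:=(f^\dagger)^*:A^*\to B^*$. An internal commutative comonoid is $(X,\delta,\epsilon)$ with $\delta:X\to X\otimes X$, $\epsilon:X\to\mathrm{I}$ satisfying $(\delta\otimes 1_X)\circ\delta=(1_X\otimes\delta)\circ\delta$, $(\epsilon\otimes 1_X)\circ\delta=1_X=(1_X\otimes\epsilon)\circ\delta$ and $\sigma_{X,X}\circ\delta=\delta$. It is called $X$-self-adjoint if the dual of $X$ in the $\dagger$-compact structure is $X^*=X$ with $\eta_X=\delta\circ\epsilon^\dagger$, and $\delta=(1_X\otimes\delta^\dagger)\circ(\eta_X\otimes 1_X)$. *)

theory Defs
  imports Main
begin

text \<open>A (strict) symmetric monoidal category with dagger and chosen duals,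
  presented concretely: objects of type 'o, morphisms of type 'm.
  cmp C g f is the composite g after f.\<close>

record ('o, 'm) dcat =
  Obj :: "'o set"
  Arr :: "'m set"
  dom :: "'m \<Rightarrow> 'o"
  cod :: "'m \<Rightarrow> 'o"
  cmp :: "'m \<Rightarrow> 'm \<Rightarrow> 'm"
  idt :: "'o \<Rightarrow> 'm"
  tno :: "'o \<Rightarrow> 'o \<Rightarrow> 'o"
  tnm :: "'m \<Rightarrow> 'm \<Rightarrow> 'm"
  unt :: "'o"
  sym :: "'o \<Rightarrow> 'o \<Rightarrow> 'm"
  dag :: "'m \<Rightarrow> 'm"
  dual :: "'o \<Rightarrow> 'o"
  eta :: "'o \<Rightarrow> 'm"

locale dagger_compact =
  fixes C :: "('o, 'm) dcat"
  assumes
    dom_obj: "f \<in> Arr C \<Longrightarrow> dom C f \<in> Obj C"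
  and cod_obj: "f \<in> Arr C \<Longrightarrow> cod C f \<in> Obj C"
  and idt_arr: "A \<in> Obj C \<Longrightarrow> idt C A \<in> Arr C"
  and dom_idt: "A \<in> Obj C \<Longrightarrow> dom C (idt C A) = A"
  and cod_idt: "A \<in> Obj C \<Longrightarrow> cod C (idt C A) = A"
  and cmp_arr: "\<lbrakk>f \<in> Arr C; g \<in> Arr C; cod C f = dom C g\<rbrakk> \<Longrightarrow> cmp C g f \<in> Arr C"
  and dom_cmp: "\<lbrakk>f \<in> Arr C; g \<in> Arr C; cod C f = dom C g\<rbrakk> \<Longrightarrow> dom C (cmp C g f) = dom C f"
  and cod_cmp: "\<lbrakk>f \<in> Arr C; g \<in> Arr C; cod C f = dom C g\<rbrakk> \<Longrightarrow> cod C (cmp C g f) = cod C g"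
  and cmp_idl: "f \<in> Arr C \<Longrightarrow> cmp C (idt C (cod C f)) f = f"
  and cmp_idr: "f \<in> Arr C \<Longrightarrow> cmp C f (idt C (dom C f)) = f"
  and cmp_assoc: "\<lbrakk>f \<in> Arr C; g \<in> Arr C; h \<in> Arr C; cod C f = dom C g; cod C g = dom C h\<rbrakk>
      \<Longrightarrow> cmp C h (cmp C g f) = cmp C (cmp C h g) f"
  and unt_obj: "unt C \<in> Obj C"
  and tno_obj: "\<lbrakk>A \<in> Obj C; B \<in> Obj C\<rbrakk> \<Longrightarrow> tno C A B \<in> Obj C"
  and tnm_arr: "\<lbrakk>f \<in> Arr C; g \<in> Arr C\<rbrakk> \<Longrightarrow> tnm C f g \<in> Arr C"
  and dom_tnm: "\<lbrakk>f \<in> Arr C; g \<in> Arr C\<rbrakk> \<Longrightarrow> dom C (tnm C f g) = tno C (dom C f) (dom C g)"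
  and cod_tnm: "\<lbrakk>f \<in> Arr C; g \<in> Arr C\<rbrakk> \<Longrightarrow> cod C (tnm C f g) = tno C (cod C f) (cod C g)"
  and tnm_idt: "\<lbrakk>A \<in> Obj C; B \<in> Obj C\<rbrakk> \<Longrightarrow> tnm C (idt C A) (idt C B) = idt C (tno C A B)"
  and tnm_cmp: "\<lbrakk>f \<in> Arr C; g \<in> Arr C; cod C f = dom C g; f' \<in> Arr C; g' \<in> Arr C; cod C f' = dom C g'\<rbrakk>
      \<Longrightarrow> tnm C (cmp C g f) (cmp C g' f') = cmp C (tnm C g g') (tnm C f f')"
  and tno_assoc: "\<lbrakk>A \<in> Obj C; B \<in> Obj C; D \<in> Obj C\<rbrakk> \<Longrightarrow> tno C (tno C A B) D = tno C A (tno C B D)"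
  and tnm_assoc: "\<lbrakk>f \<in> Arr C; g \<in> Arr C; h \<in> Arr C\<rbrakk> \<Longrightarrow> tnm C (tnm C f g) h = tnm C f (tnm C g h)"
  and tno_unit_l: "A \<in> Obj C \<Longrightarrow> tno C (unt C) A = A"
  and tno_unit_r: "A \<in> Obj C \<Longrightarrow> tno C A (unt C) = A"
  and tnm_unit_l: "f \<in> Arr C \<Longrightarrow> tnm C (idt C (unt C)) f = f"
  and tnm_unit_r: "f \<in> Arr C \<Longrightarrow> tnm C f (idt C (unt C)) = f"
  and sym_arr: "\<lbrakk>A \<in> Obj C; B \<in> Obj C\<rbrakk> \<Longrightarrow> sym C A B \<in> Arr C"
  and dom_sym: "\<lbrakk>A \<in> Obj C; B \<in> Obj C\<rbrakk> \<Longrightarrow> dom C (sym C A B) = tno C A B"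
  and cod_sym: "\<lbrakk>A \<in> Obj C; B \<in> Obj C\<rbrakk> \<Longrightarrow> cod C (sym C A B) = tno C B A"
  and sym_nat: "\<lbrakk>f \<in> Arr C; g \<in> Arr C\<rbrakk> \<Longrightarrow>
      cmp C (sym C (cod C f) (cod C g)) (tnm C f g) = cmp C (tnm C g f) (sym C (dom C f) (dom C g))"
  and sym_inv: "\<lbrakk>A \<in> Obj C; B \<in> Obj C\<rbrakk> \<Longrightarrow> cmp C (sym C B A) (sym C A B) = idt C (tno C A B)"
  and sym_hex: "\<lbrakk>A \<in> Obj C; B \<in> Obj C; D \<in> Obj C\<rbrakk> \<Longrightarrow>
      sym C A (tno C B D) = cmp C (tnm C (idt C B) (sym C A D)) (tnm C (sym C A B) (idt C D))"
  and dag_arr: "f \<in> Arr C \<Longrightarrow> dag C f \<in> Arr C"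
  and dom_dag: "f \<in> Arr C \<Longrightarrow> dom C (dag C f) = cod C f"
  and cod_dag: "f \<in> Arr C \<Longrightarrow> cod C (dag C f) = dom C f"
  and dag_idt: "A \<in> Obj C \<Longrightarrow> dag C (idt C A) = idt C A"
  and dag_cmp: "\<lbrakk>f \<in> Arr C; g \<in> Arr C; cod C f = dom C g\<rbrakk> \<Longrightarrow> dag C (cmp C g f) = cmp C (dag C f) (dag C g)"
  and dag_dag: "f \<in> Arr C \<Longrightarrow> dag C (dag C f) = f"
  and dag_tnm: "\<lbrakk>f \<in> Arr C; g \<in> Arr C\<rbrakk> \<Longrightarrow> dag C (tnm C f g) = tnm C (dag C f) (dag C g)"
  and dag_sym: "\<lbrakk>A \<in> Obj C; B \<in> Obj C\<rbrakk> \<Longrightarrow> dag C (sym C A B) = sym C B A"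
  and dual_obj: "A \<in> Obj C \<Longrightarrow> dual C A \<in> Obj C"
  and dual_dual: "A \<in> Obj C \<Longrightarrow> dual C (dual C A) = A"
  and eta_arr: "A \<in> Obj C \<Longrightarrow> eta C A \<in> Arr C"
  and dom_eta: "A \<in> Obj C \<Longrightarrow> dom C (eta C A) = unt C"
  and cod_eta: "A \<in> Obj C \<Longrightarrow> cod C (eta C A) = tno C (dual C A) A"
  and eta_dual: "A \<in> Obj C \<Longrightarrow> eta C (dual C A) = cmp C (sym C (dual C A) A) (eta C A)"
  and yank: "A \<in> Obj C \<Longrightarrow>
      cmp C (tnm C (dag C (eta C (dual C A))) (idt C A)) (tnm C (idt C A) (eta C A)) = idt C A"
  and dual_tno: "\<lbrakk>A \<in> Obj C; B \<in> Obj C\<rbrakk> \<Longrightarrow> dual C (tno C A B) = tno C (dual C A) (dual C B)"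
  and eta_tno: "\<lbrakk>A \<in> Obj C; B \<in> Obj C\<rbrakk> \<Longrightarrow> eta C (tno C A B) =
      cmp C (tnm C (tnm C (idt C (dual C A)) (sym C A (dual C B))) (idt C B)) (tnm C (eta C A) (eta C B))"

definition dstar :: "('o, 'm) dcat \<Rightarrow> 'm \<Rightarrow> 'm" where
  "dstar C f = (let A = dom C f; B = cod C f in
     cmp C (tnm C (idt C (dual C A)) (dag C (eta C (dual C B))))
       (cmp C (tnm C (tnm C (idt C (dual C A)) f) (idt C (dual C B)))
              (tnm C (eta C A) (idt C (dual C B)))))"

definition dconj :: "('o, 'm) dcat \<Rightarrow> 'm \<Rightarrow> 'm" where
  "dconj C f = dstar C (dag C f)"

definition comm_comonoid :: "('o, 'm) dcat \<Rightarrow> 'o \<Rightarrow> 'm \<Rightarrow> 'm \<Rightarrow> bool" where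
  "comm_comonoid C X d e \<longleftrightarrow>
     X \<in> Obj C \<and> d \<in> Arr C \<and> dom C d = X \<and> cod C d = tno C X X
   \<and> e \<in> Arr C \<and> dom C e = X \<and> cod C e = unt C
   \<and> cmp C (tnm C d (idt C X)) d = cmp C (tnm C (idt C X) d) d
   \<and> cmp C (tnm C e (idt C X)) d = idt C X
   \<and> cmp C (tnm C (idt C X) e) d = idt C X
   \<and> cmp C (sym C X X) d = d"

definition self_adjoint :: "('o, 'm) dcat \<Rightarrow> 'o \<Rightarrow> 'm \<Rightarrow> 'm \<Rightarrow> bool" where
  "self_adjoint C X d e \<longleftrightarrow>
     dual C X = X \<and> eta C X = cmp C d (dag C e)
   \<and> d = cmp C (tnm C (idt C X) (dag C d)) (tnm C (eta C X) (idt C X))"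

end

(* Write \<mu> = \<delta>\<^sup>\<dagger> and \<eta> for the cup of X. Self-adjointness says that \<delta> is the
   transpose (1 \<otimes> \<mu>)(\<eta> \<otimes> 1) of \<mu>, so the Frobenius law follows from associativity of \<mu>,
   the dagger of coassociativity.  Sliding the cup past a swap and using commutativity of \<mu>
   gives the partial transpose.  For (iii), transposition commutes with the dagger in every
   dagger compact category, so it suffices to show (\<delta>\<^sup>\<dagger>)\<^sup>* = \<delta>: the cup of X \<otimes> X consists of
   two cups of X, one of which recombines with \<mu> into a partial transpose of \<delta>, and the
   remaining cap is absorbed by (1 \<otimes> \<eta>\<^sup>\<dagger>)(\<delta> \<otimes> 1) = \<mu>, a consequence of Frobenius and the counit law. *)

theory Submission
  imports Defs
begin

context dagger_compact begin

abbreviation cmp_syntax (infixr "\<cdot>" 55) where "g \<cdot> f \<equiv> cmp C g f"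
abbreviation tnm_syntax (infixr "\<otimes>" 70) where "f \<otimes> g \<equiv> tnm C f g"
abbreviation idt_syntax ("\<one>\<^bsub>_\<^esub>") where "\<one>\<^bsub>A\<^esub> \<equiv> idt C A"
abbreviation dag_syntax ("_\<^sup>\<dagger>" [1000] 1000) where "f\<^sup>\<dagger> \<equiv> dag C f"

lemmas typing = dom_obj cod_obj idt_arr dom_idt cod_idt cmp_arr dom_cmp cod_cmp unt_obj tno_obj
  tnm_arr dom_tnm cod_tnm sym_arr dom_sym cod_sym dag_arr dom_dag cod_dag dual_obj dual_dual
  eta_arr dom_eta cod_eta tno_assoc tno_unit_l tno_unit_r

lemma cmp_idt_left: "\<lbrakk>f \<in> Arr C; cod C f = A\<rbrakk> \<Longrightarrow> \<one>\<^bsub>A\<^esub> \<cdot> f = f"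
  using cmp_idl by blast

lemma cmp_idt_right: "\<lbrakk>f \<in> Arr C; dom C f = A\<rbrakk> \<Longrightarrow> f \<cdot> \<one>\<^bsub>A\<^esub> = f"
  using cmp_idr by blast

lemma cmp_assoc_right: "\<lbrakk>f \<in> Arr C; g \<in> Arr C; h \<in> Arr C; cod C f = dom C g; cod C g = dom C h\<rbrakk>
    \<Longrightarrow> (h \<cdot> g) \<cdot> f = h \<cdot> g \<cdot> f"
  by (simp add: cmp_assoc)

lemma tnm_idt_tnm_idt: "\<lbrakk>A \<in> Obj C; B \<in> Obj C; f \<in> Arr C\<rbrakk> \<Longrightarrow> \<one>\<^bsub>A\<^esub> \<otimes> \<one>\<^bsub>B\<^esub> \<otimes> f = \<one>\<^bsub>tno C A B\<^esub> \<otimes> f"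
  by (metis idt_arr tnm_assoc tnm_idt)

lemmas strict = tnm_idt_tnm_idt cmp_idt_left cmp_idt_right cmp_assoc_right tnm_assoc
  tnm_unit_l tnm_unit_r tnm_idt dag_dag dag_idt

lemma tnm_idt_cmp: "\<lbrakk>A \<in> Obj C; f \<in> Arr C; g \<in> Arr C; cod C f = dom C g\<rbrakk>
    \<Longrightarrow> \<one>\<^bsub>A\<^esub> \<otimes> (g \<cdot> f) = (\<one>\<^bsub>A\<^esub> \<otimes> g) \<cdot> (\<one>\<^bsub>A\<^esub> \<otimes> f)"
  using tnm_cmp[of "\<one>\<^bsub>A\<^esub>" "\<one>\<^bsub>A\<^esub>" f g] by (simp add: typing strict)

lemma cmp_tnm_idt: "\<lbrakk>A \<in> Obj C; f \<in> Arr C; g \<in> Arr C; cod C f = dom C g\<rbrakk>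
    \<Longrightarrow> (g \<cdot> f) \<otimes> \<one>\<^bsub>A\<^esub> = (g \<otimes> \<one>\<^bsub>A\<^esub>) \<cdot> (f \<otimes> \<one>\<^bsub>A\<^esub>)"
  using tnm_cmp[of f g "\<one>\<^bsub>A\<^esub>" "\<one>\<^bsub>A\<^esub>"] by (simp add: typing strict)

lemma tnm_split_left: "\<lbrakk>f \<in> Arr C; g \<in> Arr C\<rbrakk> \<Longrightarrow> f \<otimes> g = (f \<otimes> \<one>\<^bsub>cod C g\<^esub>) \<cdot> (\<one>\<^bsub>dom C f\<^esub> \<otimes> g)"
  using tnm_cmp[of "\<one>\<^bsub>dom C f\<^esub>" f g "\<one>\<^bsub>cod C g\<^esub>"] by (simp add: typing strict)

lemma tnm_split_right: "\<lbrakk>f \<in> Arr C; g \<in> Arr C\<rbrakk> \<Longrightarrow> f \<otimes> g = (\<one>\<^bsub>cod C f\<^esub> \<otimes> g) \<cdot> (f \<otimes> \<one>\<^bsub>dom C g\<^esub>)"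
  using tnm_cmp[of f "\<one>\<^bsub>cod C f\<^esub>" "\<one>\<^bsub>dom C g\<^esub>" g] by (simp add: typing strict)

lemma sym_unit_right: "A \<in> Obj C \<Longrightarrow> sym C A (unt C) = \<one>\<^bsub>A\<^esub>"
proof -
  assume A: "A \<in> Obj C"
  let ?s = "sym C A (unt C)"
  have idem: "?s = ?s \<cdot> ?s"
    using sym_hex[OF A unt_obj unt_obj] A by (simp add: typing strict)
  have inv: "sym C (unt C) A \<cdot> ?s = \<one>\<^bsub>A\<^esub>"
    using sym_inv[OF A unt_obj] A by (simp add: typing)
  have "?s = (sym C (unt C) A \<cdot> ?s) \<cdot> ?s" using inv A by (simp add: typing strict)
  also have "\<dots> = sym C (unt C) A \<cdot> ?s \<cdot> ?s" using A by (simp add: typing strict)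
  also have "\<dots> = \<one>\<^bsub>A\<^esub>" using idem inv by simp
  finally show ?thesis .
qed

lemma sym_slide_point:
  assumes "A \<in> Obj C" "B \<in> Obj C" "D \<in> Obj C"
    and "g \<in> Arr C" "dom C g = unt C" "cod C g = tno C B D"
  shows "(sym C A B \<otimes> \<one>\<^bsub>D\<^esub>) \<cdot> (\<one>\<^bsub>A\<^esub> \<otimes> g) = (\<one>\<^bsub>B\<^esub> \<otimes> sym C D A) \<cdot> (g \<otimes> \<one>\<^bsub>A\<^esub>)"
proof -
  have nat: "sym C A (tno C B D) \<cdot> (\<one>\<^bsub>A\<^esub> \<otimes> g) = g \<otimes> \<one>\<^bsub>A\<^esub>"
    using sym_nat[of "\<one>\<^bsub>A\<^esub>" g] sym_unit_right assms by (simp add: typing strict)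
  have inv: "(\<one>\<^bsub>B\<^esub> \<otimes> sym C D A) \<cdot> (\<one>\<^bsub>B\<^esub> \<otimes> sym C A D) = \<one>\<^bsub>tno C B (tno C A D)\<^esub>"
    using tnm_idt_cmp[of B "sym C A D" "sym C D A"] sym_inv[of A D] assms
    by (simp add: typing strict)
  have "(sym C A B \<otimes> \<one>\<^bsub>D\<^esub>) \<cdot> (\<one>\<^bsub>A\<^esub> \<otimes> g)
      = ((\<one>\<^bsub>B\<^esub> \<otimes> sym C D A) \<cdot> (\<one>\<^bsub>B\<^esub> \<otimes> sym C A D)) \<cdot> (sym C A B \<otimes> \<one>\<^bsub>D\<^esub>) \<cdot> (\<one>\<^bsub>A\<^esub> \<otimes> g)"
    using inv assms by (simp add: typing strict)
  also have "\<dots> = (\<one>\<^bsub>B\<^esub> \<otimes> sym C D A) \<cdot> sym C A (tno C B D) \<cdot> (\<one>\<^bsub>A\<^esub> \<otimes> g)"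
    using sym_hex[of A B D] assms by (simp add: typing strict)
  also have "\<dots> = (\<one>\<^bsub>B\<^esub> \<otimes> sym C D A) \<cdot> (g \<otimes> \<one>\<^bsub>A\<^esub>)"
    using nat by simp
  finally show ?thesis .
qed

lemma sym_slide_copoint:
  assumes "A \<in> Obj C" "B \<in> Obj C" "D \<in> Obj C"
    and "k \<in> Arr C" "dom C k = tno C B D" "cod C k = unt C"
  shows "(k \<otimes> \<one>\<^bsub>A\<^esub>) \<cdot> (\<one>\<^bsub>B\<^esub> \<otimes> sym C A D) = (\<one>\<^bsub>A\<^esub> \<otimes> k) \<cdot> (sym C B A \<otimes> \<one>\<^bsub>D\<^esub>)"
proof -
  have "dag C ((sym C A B \<otimes> \<one>\<^bsub>D\<^esub>) \<cdot> (\<one>\<^bsub>A\<^esub> \<otimes> k\<^sup>\<dagger>))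
      = dag C ((\<one>\<^bsub>B\<^esub> \<otimes> sym C D A) \<cdot> (k\<^sup>\<dagger> \<otimes> \<one>\<^bsub>A\<^esub>))"
    using sym_slide_point[of A B D "k\<^sup>\<dagger>"] assms by (simp add: typing)
  then show ?thesis using assms by (simp add: typing strict dag_cmp dag_tnm dag_sym)
qed

text \<open>Both sides of \<open>dstar_dag\<close> are brought to a common shape, up to sliding the cap of A
  past a swap (\<open>sym_slide_copoint\<close>).\<close>

lemma dstar_dag_expand:
  assumes f: "f \<in> Arr C" "dom C f = A" "cod C f = B"
  shows "dstar C (f\<^sup>\<dagger>) = (\<one>\<^bsub>dual C B\<^esub> \<otimes> (eta C A)\<^sup>\<dagger>) \<cdot> (sym C (dual C A) (dual C B) \<otimes> \<one>\<^bsub>A\<^esub>)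
      \<cdot> (\<one>\<^bsub>tno C (dual C A) (dual C B)\<^esub> \<otimes> f\<^sup>\<dagger>) \<cdot> (\<one>\<^bsub>dual C A\<^esub> \<otimes> eta C B)"
proof -
  have A: "A \<in> Obj C" and B: "B \<in> Obj C" using f by (auto simp: typing)
  let ?A' = "dual C A" and ?B' = "dual C B"
  have unfold: "dstar C (f\<^sup>\<dagger>) = (\<one>\<^bsub>?B'\<^esub> \<otimes> (eta C A)\<^sup>\<dagger>) \<cdot> (\<one>\<^bsub>?B'\<^esub> \<otimes> sym C A ?A')
      \<cdot> (\<one>\<^bsub>?B'\<^esub> \<otimes> f\<^sup>\<dagger> \<otimes> \<one>\<^bsub>?A'\<^esub>) \<cdot> (eta C B \<otimes> \<one>\<^bsub>?A'\<^esub>)"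
    unfolding dstar_def Let_def using eta_dual[OF A] tnm_idt_cmp[of ?B' "sym C A ?A'" "(eta C A)\<^sup>\<dagger>"] f A B
    by (simp add: typing strict dag_cmp dag_sym)
  have move_cup: "eta C B \<otimes> \<one>\<^bsub>?A'\<^esub> = sym C ?A' (tno C ?B' B) \<cdot> (\<one>\<^bsub>?A'\<^esub> \<otimes> eta C B)"
    using sym_nat[of "\<one>\<^bsub>?A'\<^esub>" "eta C B"] sym_unit_right A B by (simp add: typing strict)
  have move_f: "(\<one>\<^bsub>?B'\<^esub> \<otimes> f\<^sup>\<dagger> \<otimes> \<one>\<^bsub>?A'\<^esub>) \<cdot> sym C ?A' (tno C ?B' B)
      = sym C ?A' (tno C ?B' A) \<cdot> (\<one>\<^bsub>tno C ?A' ?B'\<^esub> \<otimes> f\<^sup>\<dagger>)"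
    using sym_nat[of "\<one>\<^bsub>?A'\<^esub>" "\<one>\<^bsub>?B'\<^esub> \<otimes> f\<^sup>\<dagger>"] f A B by (simp add: typing strict)
  have unbraid: "(\<one>\<^bsub>?B'\<^esub> \<otimes> sym C A ?A') \<cdot> sym C ?A' (tno C ?B' A) = sym C ?A' ?B' \<otimes> \<one>\<^bsub>A\<^esub>"
  proof -
    have "(\<one>\<^bsub>?B'\<^esub> \<otimes> sym C A ?A') \<cdot> sym C ?A' (tno C ?B' A)
        = (\<one>\<^bsub>?B'\<^esub> \<otimes> (sym C A ?A' \<cdot> sym C ?A' A)) \<cdot> (sym C ?A' ?B' \<otimes> \<one>\<^bsub>A\<^esub>)"
      using sym_hex[of ?A' ?B' A] tnm_idt_cmp[of ?B' "sym C ?A' A" "sym C A ?A'"] A B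
      by (simp add: typing strict)
    then show ?thesis using sym_inv[of ?A' A] A B by (simp add: typing strict)
  qed
  have "dstar C (f\<^sup>\<dagger>) = (\<one>\<^bsub>?B'\<^esub> \<otimes> (eta C A)\<^sup>\<dagger>) \<cdot> (\<one>\<^bsub>?B'\<^esub> \<otimes> sym C A ?A')
      \<cdot> ((\<one>\<^bsub>?B'\<^esub> \<otimes> f\<^sup>\<dagger> \<otimes> \<one>\<^bsub>?A'\<^esub>) \<cdot> sym C ?A' (tno C ?B' B)) \<cdot> (\<one>\<^bsub>?A'\<^esub> \<otimes> eta C B)"
    using f A B by (simp add: unfold move_cup typing strict)
  also have "\<dots> = (\<one>\<^bsub>?B'\<^esub> \<otimes> (eta C A)\<^sup>\<dagger>) \<cdot> ((\<one>\<^bsub>?B'\<^esub> \<otimes> sym C A ?A') \<cdot> sym C ?A' (tno C ?B' A))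
      \<cdot> (\<one>\<^bsub>tno C ?A' ?B'\<^esub> \<otimes> f\<^sup>\<dagger>) \<cdot> (\<one>\<^bsub>?A'\<^esub> \<otimes> eta C B)"
    unfolding move_f using f A B by (simp add: typing strict)
  finally show ?thesis unfolding unbraid .
qed

lemma dag_dstar_expand:
  assumes f: "f \<in> Arr C" "dom C f = A" "cod C f = B"
  shows "(dstar C f)\<^sup>\<dagger> = ((eta C A)\<^sup>\<dagger> \<otimes> \<one>\<^bsub>dual C B\<^esub>) \<cdot> (\<one>\<^bsub>dual C A\<^esub> \<otimes> sym C (dual C B) A)
      \<cdot> (\<one>\<^bsub>tno C (dual C A) (dual C B)\<^esub> \<otimes> f\<^sup>\<dagger>) \<cdot> (\<one>\<^bsub>dual C A\<^esub> \<otimes> eta C B)"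
proof -
  have A: "A \<in> Obj C" and B: "B \<in> Obj C" using f by (auto simp: typing)
  let ?A' = "dual C A" and ?B' = "dual C B"
  have unfold: "(dstar C f)\<^sup>\<dagger> = ((eta C A)\<^sup>\<dagger> \<otimes> \<one>\<^bsub>?B'\<^esub>) \<cdot> (\<one>\<^bsub>?A'\<^esub> \<otimes> f\<^sup>\<dagger> \<otimes> \<one>\<^bsub>?B'\<^esub>)
      \<cdot> (\<one>\<^bsub>?A'\<^esub> \<otimes> sym C ?B' B) \<cdot> (\<one>\<^bsub>?A'\<^esub> \<otimes> eta C B)"
    unfolding dstar_def Let_def using eta_dual[OF B] tnm_idt_cmp[of ?A' "eta C B" "sym C ?B' B"] f A B
    by (simp add: typing strict dag_cmp dag_tnm)
  have move_f: "(f\<^sup>\<dagger> \<otimes> \<one>\<^bsub>?B'\<^esub>) \<cdot> sym C ?B' B = sym C ?B' A \<cdot> (\<one>\<^bsub>?B'\<^esub> \<otimes> f\<^sup>\<dagger>)"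
    using sym_nat[of "\<one>\<^bsub>?B'\<^esub>" "f\<^sup>\<dagger>"] f A B by (simp add: typing strict)
  have "(\<one>\<^bsub>?A'\<^esub> \<otimes> f\<^sup>\<dagger> \<otimes> \<one>\<^bsub>?B'\<^esub>) \<cdot> (\<one>\<^bsub>?A'\<^esub> \<otimes> sym C ?B' B)
      = (\<one>\<^bsub>?A'\<^esub> \<otimes> sym C ?B' A) \<cdot> (\<one>\<^bsub>tno C ?A' ?B'\<^esub> \<otimes> f\<^sup>\<dagger>)"
    using move_f tnm_idt_cmp[of ?A' "sym C ?B' B" "f\<^sup>\<dagger> \<otimes> \<one>\<^bsub>?B'\<^esub>"]
      tnm_idt_cmp[of ?A' "\<one>\<^bsub>?B'\<^esub> \<otimes> f\<^sup>\<dagger>" "sym C ?B' A"] f A B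
    by (simp add: typing strict)
  then show ?thesis using unfold f A B by (simp add: typing strict flip: cmp_assoc_right)
qed

lemma dstar_dag: "f \<in> Arr C \<Longrightarrow> dstar C (f\<^sup>\<dagger>) = (dstar C f)\<^sup>\<dagger>"
  using dstar_dag_expand[of f "dom C f" "cod C f"] dag_dstar_expand[of f "dom C f" "cod C f"]
    sym_slide_copoint[of "dual C (cod C f)" "dual C (dom C f)" "dom C f" "(eta C (dom C f))\<^sup>\<dagger>"]
  by (simp add: typing strict flip: cmp_assoc_right)

end

locale self_adjoint_comm_comonoid = dagger_compact C for C :: "('o, 'm) dcat" +
  fixes X :: 'o and d e :: 'm
  assumes comm_comonoid: "comm_comonoid C X d e"
    and self_adjoint: "self_adjoint C X d e"
begin

abbreviation one_X ("\<one>") where "\<one> \<equiv> \<one>\<^bsub>X\<^esub>"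
abbreviation mult ("\<mu>") where "\<mu> \<equiv> d\<^sup>\<dagger>"
abbreviation cup ("\<eta>") where "\<eta> \<equiv> eta C X"
abbreviation swap ("\<sigma>") where "\<sigma> \<equiv> sym C X X"

lemma X_obj [simp]: "X \<in> Obj C"
  and comult_arr [simp]: "d \<in> Arr C" "dom C d = X" "cod C d = tno C X X"
  and counit_arr [simp]: "e \<in> Arr C" "dom C e = X" "cod C e = unt C"
  and dual_X [simp]: "dual C X = X"
  using comm_comonoid self_adjoint unfolding comm_comonoid_def self_adjoint_def by auto

lemma cup_eq: "\<eta> = d \<cdot> e\<^sup>\<dagger>"
  and comult_eq: "d = (\<one> \<otimes> \<mu>) \<cdot> (\<eta> \<otimes> \<one>)"
  using self_adjoint unfolding self_adjoint_def by auto

lemma comult_coassoc: "(d \<otimes> \<one>) \<cdot> d = (\<one> \<otimes> d) \<cdot> d"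
  and comult_counit_right: "(\<one> \<otimes> e) \<cdot> d = \<one>"
  and comult_comm: "\<sigma> \<cdot> d = d"
  using comm_comonoid unfolding comm_comonoid_def by auto

lemma mult_eq: "\<mu> = (\<eta>\<^sup>\<dagger> \<otimes> \<one>) \<cdot> (\<one> \<otimes> d)"
  by (subst comult_eq) (simp add: typing strict dag_cmp dag_tnm)

lemma mult_assoc: "\<mu> \<cdot> (\<mu> \<otimes> \<one>) = \<mu> \<cdot> (\<one> \<otimes> \<mu>)"
  using arg_cong[OF comult_coassoc, of "dag C"] by (simp add: typing strict dag_cmp dag_tnm)

lemma mult_comm: "\<mu> \<cdot> \<sigma> = \<mu>"
  using arg_cong[OF comult_comm, of "dag C"] by (simp add: typing strict dag_cmp dag_sym)

lemma cap_eq: "\<eta>\<^sup>\<dagger> = e \<cdot> \<mu>"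
  by (simp add: cup_eq typing strict dag_cmp)

lemma frobenius_right: "d \<cdot> \<mu> = (\<one> \<otimes> \<mu>) \<cdot> (d \<otimes> \<one>)"
proof -
  have slide_mu: "(\<eta> \<otimes> \<one>) \<cdot> \<mu> = (\<one>\<^bsub>tno C X X\<^esub> \<otimes> \<mu>) \<cdot> (\<eta> \<otimes> \<one>\<^bsub>tno C X X\<^esub>)"
    using tnm_split_left[of \<eta> \<mu>] tnm_split_right[of \<eta> \<mu>] by (simp add: typing strict)
  have assoc: "(\<one> \<otimes> \<mu>) \<cdot> (\<one>\<^bsub>tno C X X\<^esub> \<otimes> \<mu>) = (\<one> \<otimes> \<mu>) \<cdot> (\<one> \<otimes> \<mu> \<otimes> \<one>)"
    using tnm_idt_cmp[of X "\<one> \<otimes> \<mu>" \<mu>] tnm_idt_cmp[of X "\<mu> \<otimes> \<one>" \<mu>] mult_assoc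
    by (simp add: typing strict)
  have "d \<cdot> \<mu> = (\<one> \<otimes> \<mu>) \<cdot> (\<eta> \<otimes> \<one>) \<cdot> \<mu>"
    by (subst comult_eq) (simp add: typing strict)
  also have "\<dots> = (\<one> \<otimes> \<mu>) \<cdot> (\<one> \<otimes> \<mu> \<otimes> \<one>) \<cdot> (\<eta> \<otimes> \<one>\<^bsub>tno C X X\<^esub>)"
    using slide_mu assoc by (simp add: typing strict flip: cmp_assoc_right)
  also have "\<dots> = (\<one> \<otimes> \<mu>) \<cdot> (d \<otimes> \<one>)"
    using cmp_tnm_idt[of X "\<eta> \<otimes> \<one>" "\<one> \<otimes> \<mu>"] by (simp add: typing strict flip: comult_eq)
  finally show ?thesis .
qed

lemma frobenius: "d \<cdot> \<mu> = (\<mu> \<otimes> \<one>) \<cdot> (\<one> \<otimes> d)"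
  using arg_cong[OF frobenius_right, of "dag C"] by (simp add: typing strict dag_cmp dag_tnm)

lemma comult_eq_swap: "d = (\<one> \<otimes> \<mu>) \<cdot> (\<sigma> \<otimes> \<one>) \<cdot> (\<one> \<otimes> \<eta>)"
proof -
  have "(\<one> \<otimes> \<mu>) \<cdot> (\<sigma> \<otimes> \<one>) \<cdot> (\<one> \<otimes> \<eta>) = (\<one> \<otimes> \<mu>) \<cdot> (\<one> \<otimes> \<sigma>) \<cdot> (\<eta> \<otimes> \<one>)"
    using sym_slide_point[of X X X \<eta>] by (simp add: typing)
  also have "\<dots> = (\<one> \<otimes> \<mu>) \<cdot> (\<eta> \<otimes> \<one>)"
    using tnm_idt_cmp[of X \<sigma> \<mu>] mult_comm by (simp add: typing strict flip: cmp_assoc_right)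
  finally show ?thesis using comult_eq by simp
qed

lemma comult_partial_transpose: "(\<one> \<otimes> \<eta>\<^sup>\<dagger> \<otimes> \<one>) \<cdot> (\<sigma> \<otimes> d) \<cdot> (\<one> \<otimes> \<eta>) = d"
proof -
  have "(\<one> \<otimes> \<eta>\<^sup>\<dagger> \<otimes> \<one>) \<cdot> (\<sigma> \<otimes> d) \<cdot> (\<one> \<otimes> \<eta>)
      = (\<one> \<otimes> \<eta>\<^sup>\<dagger> \<otimes> \<one>) \<cdot> (\<one>\<^bsub>tno C X X\<^esub> \<otimes> d) \<cdot> (\<sigma> \<otimes> \<one>) \<cdot> (\<one> \<otimes> \<eta>)"
    using tnm_split_right[of \<sigma> d] by (simp add: typing strict)
  also have "\<dots> = (\<one> \<otimes> \<mu>) \<cdot> (\<sigma> \<otimes> \<one>) \<cdot> (\<one> \<otimes> \<eta>)"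
    by (subst mult_eq) (simp add: typing strict tnm_idt_cmp)
  finally show ?thesis
    using comult_eq_swap by simp
qed

lemma cap_comult: "(\<one> \<otimes> \<eta>\<^sup>\<dagger>) \<cdot> (d \<otimes> \<one>) = \<mu>"
proof -
  have "(\<one> \<otimes> \<eta>\<^sup>\<dagger>) \<cdot> (d \<otimes> \<one>) = (\<one> \<otimes> e) \<cdot> (\<one> \<otimes> \<mu>) \<cdot> (d \<otimes> \<one>)"
    by (subst cap_eq) (simp add: typing strict tnm_idt_cmp)
  also have "\<dots> = (\<one> \<otimes> e) \<cdot> d \<cdot> \<mu>"
    by (simp add: frobenius_right)
  also have "\<dots> = \<mu>"
    by (simp add: cmp_assoc typing comult_counit_right cmp_idt_left)
  finally show ?thesis .
qed

lemma dstar_mult: "dstar C \<mu> = d"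
proof -
  let ?V = "(\<sigma> \<otimes> \<one>) \<cdot> (\<one> \<otimes> \<eta>)"
  have V_transpose: "(\<one> \<otimes> \<mu> \<otimes> \<one>) \<cdot> (?V \<otimes> \<one>) = d \<otimes> \<one>"
    using cmp_tnm_idt[of X ?V "\<one> \<otimes> \<mu>"] comult_eq_swap by (simp add: typing strict)
  have "dstar C \<mu> = (\<one>\<^bsub>tno C X X\<^esub> \<otimes> \<eta>\<^sup>\<dagger>) \<cdot> (\<one>\<^bsub>tno C X X\<^esub> \<otimes> \<mu> \<otimes> \<one>)
      \<cdot> (\<one> \<otimes> \<sigma> \<otimes> \<one>\<^bsub>tno C X X\<^esub>) \<cdot> (\<one>\<^bsub>tno C X X\<^esub> \<otimes> \<eta> \<otimes> \<one>) \<cdot> (\<eta> \<otimes> \<one>)"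
    using cmp_tnm_idt[of X "\<eta> \<otimes> \<eta>" "\<one> \<otimes> \<sigma> \<otimes> \<one>"] tnm_split_right[of \<eta> "\<eta> \<otimes> \<one>"]
    unfolding dstar_def Let_def by (simp add: typing strict dual_tno eta_tno dag_cmp dag_tnm dag_sym)
  also have "\<dots> = (\<one> \<otimes> ((\<one> \<otimes> \<eta>\<^sup>\<dagger>) \<cdot> (\<one> \<otimes> \<mu> \<otimes> \<one>) \<cdot> (?V \<otimes> \<one>))) \<cdot> (\<eta> \<otimes> \<one>)"
    by (simp add: typing strict tnm_idt_cmp cmp_tnm_idt)
  also have "\<dots> = (\<one> \<otimes> \<mu>) \<cdot> (\<eta> \<otimes> \<one>)"
    using V_transpose cap_comult by simp
  finally show ?thesis
    using comult_eq by simp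
qed

end
theorem mainTheorem3:
  fixes C :: "('o, 'm) dcat" and X :: 'o and d e :: 'm
  assumes "dagger_compact C"
    and "comm_comonoid C X d e"
    and "self_adjoint C X d e"
  shows "cmp C d (dag C d) = cmp C (tnm C (dag C d) (idt C X)) (tnm C (idt C X) d) \<and>
         cmp C (tnm C (tnm C (idt C X) (dag C (eta C X))) (idt C X))
           (cmp C (tnm C (sym C X X) d) (tnm C (idt C X) (eta C X))) = d \<and>
         dconj C d = d \<and> dstar C d = dag C d"
proof -
  interpret self_adjoint_comm_comonoid C X d e
    using assms by (simp add: self_adjoint_comm_comonoid_def self_adjoint_comm_comonoid_axioms_def)
  have conj: "dconj C d = d"
    unfolding dconj_def by (rule dstar_mult)
  have "dstar C d = dstar C (\<mu>\<^sup>\<dagger>)"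
    by (simp add: dag_dag)
  also have "\<dots> = d\<^sup>\<dagger>"
    by (simp add: dstar_dag dstar_mult typing)
  finally show ?thesis
    using frobenius comult_partial_transpose conj by (simp add: typing tnm_assoc)
qed

end
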